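(* Let $H\in(0,1)$ and let $B^H$ be a fractional Brownian motion on $[0,1]$ with Hurst index $H$. For all $k\ge1$ and $j=0,1,\dots,2^{k-1}-1$, $$\mathbb{V}\bigl(B^H(t^k_{2j+1})\,\big|\,\mathbf{B}^H_{k-1}\bigr)\le 2\cdot 2^{-2kH},$$ where $\mathbf{B}^H_{k-1}=(B^H(t^{k-1}_0),\dots,B^H(t^{k-1}_{2^{k-1}}))$ and the left side is the (deterministic) conditional variance.
   Context: A fractional Brownian motion with Hurst index $H$ is a centered Gaussian process with $B^H(0)=0$ and covariance $\mathbb{E}[B^H(s)B^H(t)]=\tfrac12(|s|^{2H}+|t|^{2H}-|s-t|^{2H})$. $t^n_i=i/2^n$. *)

theory Defs
  imports "HOL-Probability.Probability"
begin

definition centered_gaussian_rv :: "'a measure \<Rightarrow> ('a \<Rightarrow> real) \<Rightarrow> real \<Rightarrow> bool" where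
  "centered_gaussian_rv M Y v \<longleftrightarrow>
     Y \<in> borel_measurable M \<and>
     ((v = 0 \<and> (AE x in M. Y x = 0)) \<or>
      (v > 0 \<and> distributed M lborel Y (normal_density 0 (sqrt v))))"

definition fbm_cov :: "real \<Rightarrow> real \<Rightarrow> real \<Rightarrow> real" where
  "fbm_cov H s t = (\<bar>s\<bar> powr (2*H) + \<bar>t\<bar> powr (2*H) - \<bar>s - t\<bar> powr (2*H)) / 2"

text \<open>B is a fractional Brownian motion on [0,1] with Hurst index H on the probability space M:
  a centered Gaussian process (every finite linear combination is centered Gaussian),
  B 0 = 0, and covariance fbm_cov H.\<close>
definition is_fbm :: "'a measure \<Rightarrow> real \<Rightarrow> (real \<Rightarrow> 'a \<Rightarrow> real) \<Rightarrow> bool" where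
  "is_fbm M H B \<longleftrightarrow>
     prob_space M \<and>
     (\<forall>t\<in>{0..1}. B t \<in> borel_measurable M) \<and>
     (AE x in M. B 0 x = 0) \<and>
     (\<forall>I c. finite I \<and> I \<subseteq> {0..1} \<longrightarrow>
        (\<exists>v. centered_gaussian_rv M (\<lambda>x. \<Sum>t\<in>I. c t * B t x) v)) \<and>
     (\<forall>s\<in>{0..1}. \<forall>t\<in>{0..1}. integrable M (\<lambda>x. B s x * B t x) \<and>
        (\<integral>x. B s x * B t x \<partial>M) = fbm_cov H s t)"

definition dyadic :: "nat \<Rightarrow> nat \<Rightarrow> real" where
  "dyadic n i = real i / 2 ^ n"

definition gen_sigma :: "'a measure \<Rightarrow> (real \<Rightarrow> 'a \<Rightarrow> real) \<Rightarrow> real set \<Rightarrow> 'a measure" where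
  "gen_sigma M B T = sigma (space M) {B t -` A \<inter> space M | t A. t \<in> T \<and> A \<in> sets borel}"

definition cond_var :: "'a measure \<Rightarrow> 'a measure \<Rightarrow> ('a \<Rightarrow> real) \<Rightarrow> 'a \<Rightarrow> real" where
  "cond_var M F X = real_cond_exp M F (\<lambda>x. (X x - real_cond_exp M F X x)\<^sup>2)"

end

theory Submission
  imports Defs
begin

(* Put T = S \<union> {t}, where S is the dyadic grid of level k - 1 and t = t^k_{2j+1}.  The covariance
  of B is a positive semidefinite bilinear form on coefficient vectors over T, so B t has an
  orthogonal projection L = \<Sum>\<sigma>\<in>S. p \<sigma> * B \<sigma> onto the span of the B \<sigma>, \<sigma> \<in> S.  The residual
  Z = B t - L is a linear combination of a Gaussian family that is uncorrelated with every B \<sigma>;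
  comparing characteristic functions and applying Levy's uniqueness theorem one coordinate at a
  time shows that Z is independent of the sigma algebra generated by the B \<sigma>.  Hence the
  conditional expectation of B t is L, and the conditional variance is the constant E Z\<^sup>2.  This
  is the minimal mean square distance from B t to the span, so it is at most
  E (B t - B s)\<^sup>2 = \<bar>t - s\<bar> powr (2 H) = 2 powr (- 2 k H) for the neighbour s = t^(k-1)_j. *)

lemma integrable_mult_iexp:
  fixes h :: "'a \<Rightarrow> complex"
  assumes "integrable M h" and [measurable]: "V \<in> borel_measurable M"
  shows "integrable M (\<lambda>x. h x * iexp (s * V x))"
  by (rule Bochner_Integration.integrable_bound[OF assms(1)]) (use assms(1) in \<open>auto simp: norm_mult\<close>)

lemma integrable_mult_indicator_comp:
  fixes f :: "'a \<Rightarrow> 'b::{real_normed_field, banach, second_countable_topology}"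
  assumes "integrable M f" and [measurable]: "V \<in> borel_measurable M" "A \<in> sets borel"
  shows "integrable M (\<lambda>x. f x * indicator A (V x))"
  by (rule Bochner_Integration.integrable_bound[OF assms(1)])
     (use assms(1) in \<open>auto simp: norm_mult indicator_def\<close>)

lemma Levy_uniqueness_weighted_nonneg:
  fixes p q V :: "'a \<Rightarrow> real"
  assumes "prob_space M" and [measurable]: "V \<in> borel_measurable M"
    and p: "integrable M p" "\<And>x. 0 \<le> p x" and q: "integrable M q" "\<And>x. 0 \<le> q x"
    and char_eq: "\<And>s. (\<integral>x. of_real (p x) * iexp (s * V x) \<partial>M) = (\<integral>x. of_real (q x) * iexp (s * V x) \<partial>M)"
    and [measurable]: "A \<in> sets borel"
  shows "(\<integral>x. p x * indicator A (V x) \<partial>M) = (\<integral>x. q x * indicator A (V x) \<partial>M)"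
proof -
  interpret prob_space M by fact
  have [measurable]: "p \<in> borel_measurable M" "q \<in> borel_measurable M" using p q by auto
  define c where "c = (\<integral>x. p x \<partial>M)"
  have c_q: "c = (\<integral>x. q x \<partial>M)" using char_eq[of 0] unfolding c_def by simp
  have "c \<ge> 0" unfolding c_def using p by (simp add: integral_nonneg_AE)
  show ?thesis
  proof (cases "c = 0")
    case True
    have "(\<integral>x. p x \<partial>M) = 0" "(\<integral>x. q x \<partial>M) = 0"
      using True c_q unfolding c_def by simp_all
    then have "AE x in M. p x = 0" "AE x in M. q x = 0"
      using p q by (simp_all add: integral_nonneg_eq_0_iff_AE)
    then show ?thesis
      by (subst (1 2) integral_cong_AE[where g="\<lambda>_. 0"]) auto
  next
    case False
    with \<open>c \<ge> 0\<close> have "c > 0" by simp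
    define N where "N r = distr (density M (\<lambda>x. r x / c)) borel V" for r :: "'a \<Rightarrow> real"
    have density_integral: "(\<integral>y. f y \<partial>N r) = (\<integral>x. of_real (r x) * f (V x) \<partial>M) / of_real c"
      if [measurable]: "r \<in> borel_measurable M" "f \<in> borel_measurable borel" and "\<And>x. 0 \<le> r x"
      for r and f :: "real \<Rightarrow> 'b::{real_normed_field, banach, second_countable_topology}"
      using that \<open>c > 0\<close> unfolding N_def
      by (simp add: integral_distr integral_density scaleR_conv_of_real)
    have real_distribution: "real_distribution (N r)"
      if [measurable]: "r \<in> borel_measurable M" and "integrable M r" "\<And>x. 0 \<le> r x" "(\<integral>x. r x \<partial>M) = c" for r
    proof -
      have "emeasure (density M (\<lambda>x. r x / c)) (space M) = (\<integral>\<^sup>+x. ennreal (r x / c) \<partial>M)"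
        by (simp add: emeasure_density)
      also have "\<dots> = ennreal (\<integral>x. r x / c \<partial>M)"
        using that \<open>c > 0\<close> by (intro nn_integral_eq_integral) auto
      also have "\<dots> = 1"
        using that \<open>c > 0\<close> by simp
      finally have "prob_space (density M (\<lambda>x. r x / c))"
        by (intro prob_spaceI) simp
      then show ?thesis
        unfolding real_distribution_def real_distribution_axioms_def N_def
        by (auto intro: prob_space.prob_space_distr)
    qed
    have "N p = N q"
    proof (rule Levy_uniqueness)
      show "real_distribution (N p)" "real_distribution (N q)"
        using p q c_q by (auto intro!: real_distribution simp: c_def)
      show "char (N p) = char (N q)"
        using char_eq p q by (auto simp: char_def density_integral)
    qed
    then show ?thesis
      using density_integral[of p "indicator A :: real \<Rightarrow> real"]
        density_integral[of q "indicator A :: real \<Rightarrow> real"] p q \<open>c > 0\<close>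
      by simp
  qed
qed

lemma Levy_uniqueness_weighted_real:
  fixes w V :: "'a \<Rightarrow> real"
  assumes "prob_space M" and [measurable]: "V \<in> borel_measurable M"
    and w: "integrable M w"
    and char_0: "\<And>s. (\<integral>x. of_real (w x) * iexp (s * V x) \<partial>M) = 0"
    and [measurable]: "A \<in> sets borel"
  shows "(\<integral>x. w x * indicator A (V x) \<partial>M) = 0"
proof -
  define p where "p x = max (w x) 0" for x
  define q where "q x = max (- w x) 0" for x
  have pq: "integrable M p" "integrable M q" and pq_nonneg: "0 \<le> p x" "0 \<le> q x"
    and w_eq: "w x = p x - q x" for x
    using w unfolding p_def q_def by auto
  have "(\<integral>x. of_real (p x) * iexp (s * V x) \<partial>M) = (\<integral>x. of_real (q x) * iexp (s * V x) \<partial>M)" for s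
  proof -
    have "(\<integral>x. of_real (p x) * iexp (s * V x) \<partial>M) - (\<integral>x. of_real (q x) * iexp (s * V x) \<partial>M)
        = (\<integral>x. of_real (w x) * iexp (s * V x) \<partial>M)"
      using integrable_mult_iexp[OF integrable_of_real[OF pq(1)], of V s]
        integrable_mult_iexp[OF integrable_of_real[OF pq(2)], of V s]
      by (subst Bochner_Integration.integral_diff[symmetric]) (simp_all add: w_eq left_diff_distrib)
    then show ?thesis using char_0[of s] by simp
  qed
  then have "(\<integral>x. p x * indicator A (V x) \<partial>M) = (\<integral>x. q x * indicator A (V x) \<partial>M)"
    using pq pq_nonneg by (intro Levy_uniqueness_weighted_nonneg[OF assms(1,2)]) simp_all
  moreover have "(\<integral>x. w x * indicator A (V x) \<partial>M)
      = (\<integral>x. p x * indicator A (V x) \<partial>M) - (\<integral>x. q x * indicator A (V x) \<partial>M)"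
    using pq by (subst Bochner_Integration.integral_diff[symmetric])
      (auto intro!: integrable_mult_indicator_comp simp: w_eq left_diff_distrib)
  ultimately show ?thesis by simp
qed

lemma Levy_uniqueness_weighted:
  fixes h :: "'a \<Rightarrow> complex" and V :: "'a \<Rightarrow> real"
  assumes "prob_space M" and [measurable]: "V \<in> borel_measurable M"
    and h: "integrable M h"
    and char_0: "\<And>s. (\<integral>x. h x * iexp (s * V x) \<partial>M) = 0"
    and [measurable]: "A \<in> sets borel"
  shows "(\<integral>x. h x * indicator A (V x) \<partial>M) = 0"
proof -
  have cnj_h: "integrable M (\<lambda>x. cnj (h x))"
    using h by simp
  have cnj_char_0: "(\<integral>x. cnj (h x) * iexp (s * V x) \<partial>M) = 0" for s
  proof -
    have "(\<integral>x. cnj (h x) * iexp (s * V x) \<partial>M) = cnj (\<integral>x. h x * iexp (- s * V x) \<partial>M)"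
      by (simp add: exp_cnj flip: Bochner_Integration.integral_cnj)
    then show ?thesis using char_0[of "- s"] by simp
  qed
  have sum_0: "(\<integral>x. (a * h x + b * cnj (h x)) * iexp (s * V x) \<partial>M) = 0" for a b s
  proof -
    have "(\<integral>x. (a * h x + b * cnj (h x)) * iexp (s * V x) \<partial>M)
        = a * (\<integral>x. h x * iexp (s * V x) \<partial>M) + b * (\<integral>x. cnj (h x) * iexp (s * V x) \<partial>M)"
      using integrable_mult_iexp[OF h, of V s] integrable_mult_iexp[OF cnj_h, of V s] assms(2)
      by (simp only: distrib_right mult.assoc Bochner_Integration.integral_add integrable_mult_right
          integral_mult_right_zero)
    then show ?thesis using char_0 cnj_char_0 by simp
  qed
  have "of_real (Re z) = 1/2 * z + 1/2 * cnj z" "of_real (Im z) = - \<i>/2 * z + \<i>/2 * cnj z" for z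
    by (simp_all add: complex_eq_iff)
  then have "(\<integral>x. of_real (Re (h x)) * iexp (s * V x) \<partial>M) = 0"
    "(\<integral>x. of_real (Im (h x)) * iexp (s * V x) \<partial>M) = 0" for s
    by (simp_all only: sum_0)
  then have Re_0: "(\<integral>x. Re (h x) * indicator A (V x) \<partial>M) = 0"
    and Im_0: "(\<integral>x. Im (h x) * indicator A (V x) \<partial>M) = 0"
    using h by (auto intro!: Levy_uniqueness_weighted_real[OF assms(1,2)])
  have "integrable M (\<lambda>x. h x * indicator A (V x))"
    using h by (rule integrable_mult_indicator_comp) simp_all
  moreover have "Re (h x * indicator A (V x)) = Re (h x) * indicator A (V x)"
    "Im (h x * indicator A (V x)) = Im (h x) * indicator A (V x)" for x
    by (simp_all add: indicator_def)
  ultimately show ?thesis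
    using Re_0 Im_0 by (simp add: complex_eq_iff flip: integral_Re integral_Im)
qed

lemma (in prob_space) char_factorization_indicator:
  fixes P U V W :: "'a \<Rightarrow> real"
  assumes [measurable]: "P \<in> borel_measurable M" "U \<in> borel_measurable M" "V \<in> borel_measurable M"
      "W \<in> borel_measurable M" "A \<in> sets borel"
    and P: "\<And>x. 0 \<le> P x" "\<And>x. P x \<le> 1"
    and factor: "\<And>r. (\<integral>x. of_real (P x) * iexp (U x + r * V x) * iexp (W x) \<partial>M)
      = (\<integral>x. of_real (P x) * iexp (U x + r * V x) \<partial>M) * (\<integral>x. iexp (W x) \<partial>M)"
  shows "(\<integral>x. of_real (P x * indicator A (V x)) * iexp (U x) * iexp (W x) \<partial>M)
    = (\<integral>x. of_real (P x * indicator A (V x)) * iexp (U x) \<partial>M) * (\<integral>x. iexp (W x) \<partial>M)"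
proof -
  define \<phi> where "\<phi> = (\<integral>x. iexp (W x) \<partial>M)"
  have "norm \<phi> \<le> 1"
    unfolding \<phi>_def by (rule order_trans[OF integral_norm_bound]) (simp add: prob_space)
  have integrable: "integrable M (\<lambda>x. of_real (Q x) * iexp (Y x) * f x)"
    if [measurable]: "Q \<in> borel_measurable M" "Y \<in> borel_measurable M" "f \<in> borel_measurable M"
      and "\<And>x. \<bar>Q x\<bar> \<le> 1" "\<And>x. norm (f x) \<le> C" for Q Y f C
  proof (rule integrable_const_bound[OF AE_I2])
    show "norm (of_real (Q x) * iexp (Y x) * f x) \<le> 1 * C" for x
      unfolding norm_mult using that(4,5)[of x] by (intro mult_mono) auto
  qed simp
  define h where "h x = of_real (P x) * iexp (U x) * (iexp (W x) - \<phi>)" for x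
  have "(\<integral>x. h x * indicator A (V x) \<partial>M) = 0"
  proof (rule Levy_uniqueness_weighted[OF prob_space_axioms])
    have "norm (iexp (W x) - \<phi>) \<le> 2" for x
      using norm_triangle_ineq4[of "iexp (W x)" \<phi>] \<open>norm \<phi> \<le> 1\<close> by simp
    then show "integrable M h"
      unfolding h_def using P by (intro integrable) auto
    fix r
    have "h x * iexp (r * V x) = of_real (P x) * iexp (U x + r * V x) * iexp (W x)
        - of_real (P x) * iexp (U x + r * V x) * \<phi>" for x
      by (simp add: h_def algebra_simps exp_add)
    moreover have int_r: "integrable M (\<lambda>x. of_real (P x) * iexp (U x + r * V x) * f x)"
      if "f \<in> borel_measurable M" "\<And>x. norm (f x) \<le> 1" for f
      using that P by (intro integrable) auto
    ultimately show "(\<integral>x. h x * iexp (r * V x) \<partial>M) = 0"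
      using int_r[of "\<lambda>x. iexp (W x)"] int_r[of "\<lambda>_. \<phi>"] factor[of r] \<open>norm \<phi> \<le> 1\<close>
      unfolding \<phi>_def by simp
  qed simp_all
  moreover have "h x * indicator A (V x) = of_real (P x * indicator A (V x)) * iexp (U x) * iexp (W x)
      - of_real (P x * indicator A (V x)) * iexp (U x) * \<phi>" for x
    by (simp add: h_def algebra_simps indicator_def)
  moreover have int_A: "integrable M (\<lambda>x. of_real (P x * indicator A (V x)) * iexp (U x) * f x)"
    if "f \<in> borel_measurable M" "\<And>x. norm (f x) \<le> 1" for f
    using that P by (intro integrable) (auto simp: indicator_def)
  ultimately show ?thesis
    using int_A[of "\<lambda>x. iexp (W x)"] int_A[of "\<lambda>_. \<phi>"] \<open>norm \<phi> \<le> 1\<close> unfolding \<phi>_def by simp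
qed

lemma (in prob_space) prob_Int_vimage_if_char_factorizes:
  fixes Z :: "'a \<Rightarrow> real"
  assumes X: "X \<in> events" and [measurable]: "Z \<in> borel_measurable M" "U \<in> sets borel"
    and char: "\<And>s. (\<integral>x. indicator X x * iexp (s * Z x) \<partial>M) = prob X * (\<integral>x. iexp (s * Z x) \<partial>M)"
  shows "prob (X \<inter> (Z -` U \<inter> space M)) = prob X * prob (Z -` U \<inter> space M)"
proof -
  have integrable_indicator: "integrable M (indicator E :: 'a \<Rightarrow> real)" if "E \<in> events" for E
    using that by (intro integrable_real_indicator) (simp_all add: less_top[symmetric])
  have "(\<integral>x. of_real (indicator X x - prob X) * iexp (s * Z x) \<partial>M) = 0" for s
  proof -
    have "(\<integral>x. of_real (indicator X x - prob X) * iexp (s * Z x) \<partial>M)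
        = (\<integral>x. indicator X x * iexp (s * Z x) - prob X * iexp (s * Z x) \<partial>M)"
      by (intro Bochner_Integration.integral_cong) (auto simp: indicator_def left_diff_distrib)
    then show ?thesis
      using char[of s] integrable_mult_iexp[OF integrable_of_real[OF integrable_indicator[OF X]], of Z s]
        integrable_mult_iexp[OF integrable_const[of "of_real (prob X) :: complex"], of Z s]
      by (simp add: of_real_indicator)
  qed
  then have "(\<integral>x. (indicator X x - prob X) * indicator U (Z x) \<partial>M) = 0"
    using integrable_indicator[OF X] by (intro Levy_uniqueness_weighted_real[OF prob_space_axioms]) simp_all
  moreover have "(\<integral>x. (indicator X x - prob X) * indicator U (Z x) \<partial>M)
      = (\<integral>x. indicator (X \<inter> (Z -` U \<inter> space M)) x - prob X * indicator (Z -` U \<inter> space M) x \<partial>M)"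
    by (intro Bochner_Integration.integral_cong) (auto simp: indicator_def)
  ultimately show ?thesis
    using X integrable_indicator by simp
qed

lemma centered_gaussian_rv_moments:
  assumes "prob_space M" and gauss: "centered_gaussian_rv M W v"
  shows centered_gaussian_rv_mean: "(\<integral>x. W x \<partial>M) = 0"
    and centered_gaussian_rv_second_moment: "(\<integral>x. (W x)\<^sup>2 \<partial>M) = v"
    and centered_gaussian_rv_char: "(\<integral>x. iexp (W x) \<partial>M) = exp (- v / 2)"
proof -
  interpret prob_space M by fact
  have [measurable]: "W \<in> borel_measurable M" using gauss unfolding centered_gaussian_rv_def by simp
  consider "v = 0" "AE x in M. W x = 0"
    | "v > 0" "distributed M lborel W (normal_density 0 (sqrt v))"
    using gauss unfolding centered_gaussian_rv_def by auto
  then have "(\<integral>x. W x \<partial>M) = 0 \<and> (\<integral>x. (W x)\<^sup>2 \<partial>M) = v \<and> (\<integral>x. iexp (W x) \<partial>M) = exp (- v / 2)"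
  proof cases
    case 1
    then have "(\<integral>x. f (W x) \<partial>M) = f 0"
      if [measurable]: "f \<in> borel_measurable borel" for f :: "real \<Rightarrow> 'b::{banach, second_countable_topology}"
      by (subst integral_cong_AE[where g="\<lambda>_. f 0"]) (auto simp: prob_space)
    from this[of "\<lambda>y. y"] this[of "\<lambda>y. y\<^sup>2"] this[of iexp] 1 show ?thesis by simp
  next
    case 2
    then have "sqrt v > 0" by simp
    have "distributed M lborel (\<lambda>x. (W x - 0) / sqrt v) std_normal_density"
      using normal_standard_normal_convert[OF \<open>sqrt v > 0\<close>] 2 by simp
    then have "distr M lborel (\<lambda>x. W x / sqrt v) = std_normal_distribution"
      by (simp add: distributed_distr_eq_density)
    then have "char std_normal_distribution (sqrt v) = (\<integral>x. iexp (W x) \<partial>M)"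
      using \<open>sqrt v > 0\<close> unfolding char_def by (subst (asm) eq_commute) (simp add: integral_distr)
    then show ?thesis
      using normal_distributed_expectation[OF \<open>sqrt v > 0\<close> 2(2)]
        normal_distributed_variance[OF \<open>sqrt v > 0\<close> 2(2)] 2
      by (simp add: char_std_normal_distribution)
  qed
  then show "(\<integral>x. W x \<partial>M) = 0" "(\<integral>x. (W x)\<^sup>2 \<partial>M) = v" "(\<integral>x. iexp (W x) \<partial>M) = exp (- v / 2)"
    by simp_all
qed

definition cylinder_events :: "'a measure \<Rightarrow> (real \<Rightarrow> 'a \<Rightarrow> real) \<Rightarrow> real set \<Rightarrow> 'a set set" where
  "cylinder_events M B S = {{x \<in> space M. \<forall>\<sigma>\<in>S. B \<sigma> x \<in> A \<sigma>} | A. \<forall>\<sigma>\<in>S. A \<sigma> \<in> sets borel}"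

lemma space_gen_sigma [simp]: "space (gen_sigma M B S) = space M"
  unfolding gen_sigma_def by (rule space_measure_of) auto

lemma sets_gen_sigma:
  "sets (gen_sigma M B S) = sigma_sets (space M) {B t -` A \<inter> space M | t A. t \<in> S \<and> A \<in> sets borel}"
  unfolding gen_sigma_def by (rule sets_measure_of) auto

lemma measurable_gen_sigma: "\<sigma> \<in> S \<Longrightarrow> B \<sigma> \<in> borel_measurable (gen_sigma M B S)"
  by (rule measurableI) (auto simp: sets_gen_sigma)

lemma subalgebra_gen_sigma:
  assumes "\<And>\<sigma>. \<sigma> \<in> S \<Longrightarrow> B \<sigma> \<in> borel_measurable M"
  shows "subalgebra M (gen_sigma M B S)"
  unfolding subalgebra_def using assms
  by (auto simp: sets_gen_sigma intro!: sets.sigma_sets_subset measurable_sets)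

lemma cylinder_events_subset_gen_sigma:
  assumes "finite S"
  shows "cylinder_events M B S \<subseteq> sets (gen_sigma M B S)"
proof
  fix X assume "X \<in> cylinder_events M B S"
  then obtain A where X: "X = {x \<in> space M. \<forall>\<sigma>\<in>S. B \<sigma> x \<in> A \<sigma>}" and A: "\<forall>\<sigma>\<in>S. A \<sigma> \<in> sets borel"
    unfolding cylinder_events_def by blast
  have "{x \<in> space (gen_sigma M B S). \<forall>\<sigma>\<in>S. B \<sigma> x \<in> A \<sigma>} \<in> sets (gen_sigma M B S)"
  proof (intro sets.sets_Collect_finite_All[OF _ assms])
    fix \<sigma> assume "\<sigma> \<in> S"
    then have "B \<sigma> -` A \<sigma> \<inter> space (gen_sigma M B S) \<in> sets (gen_sigma M B S)"
      using A by (intro measurable_sets[OF measurable_gen_sigma]) auto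
    then show "{x \<in> space (gen_sigma M B S). B \<sigma> x \<in> A \<sigma>} \<in> sets (gen_sigma M B S)"
      by (simp add: vimage_def Int_def conj_commute)
  qed
  then show "X \<in> sets (gen_sigma M B S)" unfolding X by simp
qed

lemma sets_gen_sigma_cylinder_events:
  assumes "finite S"
  shows "sets (gen_sigma M B S) = sigma_sets (space M) (cylinder_events M B S)"
proof
  have "{B t -` A \<inter> space M | t A. t \<in> S \<and> A \<in> sets borel} \<subseteq> cylinder_events M B S"
  proof safe
    fix t and A :: "real set" assume "t \<in> S" "A \<in> sets borel"
    then have "B t -` A \<inter> space M = {x \<in> space M. \<forall>\<sigma>\<in>S. B \<sigma> x \<in> (if \<sigma> = t then A else UNIV)}"
      by auto
    with \<open>A \<in> sets borel\<close> show "B t -` A \<inter> space M \<in> cylinder_events M B S"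
      unfolding cylinder_events_def by (intro CollectI exI[of _ "\<lambda>\<sigma>. if \<sigma> = t then A else UNIV"]) simp
  qed
  then show "sets (gen_sigma M B S) \<subseteq> sigma_sets (space M) (cylinder_events M B S)"
    unfolding sets_gen_sigma by (rule sigma_sets_mono')
  show "sigma_sets (space M) (cylinder_events M B S) \<subseteq> sets (gen_sigma M B S)"
    using sets.sigma_sets_subset[OF cylinder_events_subset_gen_sigma[OF assms]] by simp
qed

lemma Int_stable_cylinder_events: "Int_stable (cylinder_events M B S)"
proof (rule Int_stableI)
  fix X Y assume "X \<in> cylinder_events M B S" "Y \<in> cylinder_events M B S"
  then obtain A A' where "X = {x \<in> space M. \<forall>\<sigma>\<in>S. B \<sigma> x \<in> A \<sigma>}" "\<forall>\<sigma>\<in>S. A \<sigma> \<in> sets borel"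
    "Y = {x \<in> space M. \<forall>\<sigma>\<in>S. B \<sigma> x \<in> A' \<sigma>}" "\<forall>\<sigma>\<in>S. A' \<sigma> \<in> sets borel"
    unfolding cylinder_events_def by auto
  then have "X \<inter> Y = {x \<in> space M. \<forall>\<sigma>\<in>S. B \<sigma> x \<in> A \<sigma> \<inter> A' \<sigma>}"
    and "\<forall>\<sigma>\<in>S. A \<sigma> \<inter> A' \<sigma> \<in> sets borel"
    by auto
  then show "X \<inter> Y \<in> cylinder_events M B S"
    unfolding cylinder_events_def by (intro CollectI exI[of _ "\<lambda>\<sigma>. A \<sigma> \<inter> A' \<sigma>"]) simp
qed

lemma (in prob_space) indep_set_mono:
  "indep_set A B \<Longrightarrow> A' \<subseteq> A \<Longrightarrow> B' \<subseteq> B \<Longrightarrow> indep_set A' B'"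
  unfolding indep_sets2_eq by blast

lemma (in prob_space) real_cond_exp_indep:
  fixes X :: "'a \<Rightarrow> real"
  assumes F: "subalgebra M F"
    and indep: "indep_set (sets F) (sigma_sets (space M) {X -` U \<inter> space M | U. U \<in> sets borel})"
    and [measurable]: "X \<in> borel_measurable M" "g \<in> borel_measurable borel"
    and int: "integrable M (\<lambda>x. g (X x))"
  shows "AE x in M. real_cond_exp M F (\<lambda>x. g (X x)) x = expectation (\<lambda>x. g (X x))"
proof -
  interpret sigma_finite_subalgebra M F
    by (intro finite_measure_subalgebra_is_sigma_finite) (unfold_locales, fact F)
  show ?thesis
  proof (rule real_cond_exp_charact)
    fix A assume "A \<in> sets F"
    then have [measurable]: "A \<in> sets M" and A_F: "indicator A \<in> borel_measurable F"
      using F by (auto simp: subalgebra_def)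
    have "sigma_sets (space M) {indicator A -` U \<inter> space M | U. U \<in> sets (borel :: real measure)}
        \<subseteq> sets F"
      using measurable_sets[OF A_F] F sets.top[of F]
      by (intro sets.sigma_sets_subset') (auto simp: subalgebra_def simp del: sets.top)
    with indep have "indep_var borel (indicator A :: 'a \<Rightarrow> real) borel X"
      by (auto simp: indep_var_eq intro: indep_set_mono)
    then have "indep_var borel (id \<circ> indicator A) borel (g \<circ> X)"
      by (rule indep_var_compose) simp_all
    moreover have "integrable M (indicator A :: 'a \<Rightarrow> real)"
      by (intro integrable_real_indicator) (simp_all add: less_top[symmetric])
    ultimately have "(\<integral>x. indicator A x * g (X x) \<partial>M) = prob A * expectation (\<lambda>x. g (X x))"
      using int by (subst indep_var_lebesgue_integral) (auto simp: comp_def)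
    then show "(\<integral>x\<in>A. g (X x) \<partial>M) = (\<integral>x\<in>A. expectation (\<lambda>x. g (X x)) \<partial>M)"
      by (simp add: set_lebesgue_integral_def)
  qed (use int in simp_all)
qed

locale semi_inner_product =
  fixes Q :: "('i \<Rightarrow> real) \<Rightarrow> ('i \<Rightarrow> real) \<Rightarrow> real"
  assumes linear_left: "Q (\<lambda>\<tau>. r * a \<tau> + s * b \<tau>) c = r * Q a c + s * Q b c"
    and sym: "Q a b = Q b a"
    and nonneg: "0 \<le> Q a a"
begin

lemma add_left: "Q (\<lambda>\<tau>. a \<tau> + b \<tau>) c = Q a c + Q b c"
  using linear_left[of 1 a 1 b c] by simp

lemma scale_left: "Q (\<lambda>\<tau>. r * a \<tau>) c = r * Q a c"
  using linear_left[of r a 0 a c] by simp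

lemma add_right: "Q c (\<lambda>\<tau>. a \<tau> + b \<tau>) = Q c a + Q c b"
  using add_left sym by metis

lemma scale_scale: "Q (\<lambda>\<tau>. r * a \<tau>) (\<lambda>\<tau>. r * a \<tau>) = r\<^sup>2 * Q a a"
  using scale_left[of r a] scale_left[of r a a] sym[of a "\<lambda>\<tau>. r * a \<tau>"]
  by (simp add: power2_eq_square)

lemma pythagoras:
  assumes "Q a b = 0"
  shows "Q (\<lambda>\<tau>. a \<tau> + s * b \<tau>) (\<lambda>\<tau>. a \<tau> + s * b \<tau>) = Q a a + s\<^sup>2 * Q b b"
proof -
  let ?c = "\<lambda>\<tau>. a \<tau> + s * b \<tau>"
  have lin: "Q ?c d = Q a d + s * Q b d" for d
    using linear_left[of 1 a s b d] by simp
  have "Q ?c ?c = Q a ?c + s * Q b ?c" by (rule lin)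
  also have "Q a ?c = Q a a + s * Q b a" using lin[of a] sym[of a ?c] by simp
  also have "Q b ?c = Q a b + s * Q b b" using lin[of b] sym[of b ?c] by simp
  finally show ?thesis using assms sym[of b a] by (simp add: power2_eq_square)
qed

lemma sum_left: "finite S \<Longrightarrow> Q (\<lambda>\<tau>. \<Sum>\<sigma>\<in>S. r \<sigma> * a \<sigma> \<tau>) c = (\<Sum>\<sigma>\<in>S. r \<sigma> * Q (a \<sigma>) c)"
proof (induction S rule: finite_induct)
  case empty
  show ?case using linear_left[of 0 c 0 c c] by simp
next
  case (insert \<sigma> S)
  then show ?case using linear_left[of "r \<sigma>" "a \<sigma>" 1] by simp
qed

lemma orthogonal_if_supported:
  assumes "finite S" and "{\<tau>. p \<tau> \<noteq> 0} \<subseteq> S" and "\<forall>\<sigma>\<in>S. Q y (indicator {\<sigma>}) = 0"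
  shows "Q p y = 0"
proof -
  have "p = (\<lambda>\<tau>. \<Sum>\<sigma>\<in>S. p \<sigma> * indicator {\<sigma>} \<tau>)"
    using assms(1,2) by (auto simp: indicator_def fun_eq_iff Int_insert_right)
  then have "Q p y = (\<Sum>\<sigma>\<in>S. p \<sigma> * Q (indicator {\<sigma>}) y)"
    using sum_left[OF assms(1)] by metis
  then show ?thesis using assms(3) sym by simp
qed

lemma null_imp_orthogonal:
  assumes "Q r r = 0"
  shows "Q r y = 0"
proof -
  define b where "b = Q r y"
  define c where "c = Q y y"
  have "c \<ge> 0" unfolding c_def by (rule nonneg)
  have "0 \<le> Q (\<lambda>\<tau>. 1 * r \<tau> + l * y \<tau>) (\<lambda>\<tau>. 1 * r \<tau> + l * y \<tau>)" for l
    by (rule nonneg)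
  also have "Q (\<lambda>\<tau>. 1 * r \<tau> + l * y \<tau>) (\<lambda>\<tau>. 1 * r \<tau> + l * y \<tau>) = 2 * l * b + l\<^sup>2 * c" for l
    using assms sym[of y r] unfolding b_def c_def linear_left sym[of _ "\<lambda>\<tau>. 1 * r \<tau> + l * y \<tau>"]
    by (simp add: power2_eq_square algebra_simps)
  finally have "0 \<le> 2 * (- b / (c + 1)) * b + (- b / (c + 1))\<^sup>2 * c" .
  also have "\<dots> = - b\<^sup>2 * (c + 2) / (c + 1)\<^sup>2"
    using \<open>c \<ge> 0\<close> by (simp add: field_simps power2_eq_square add_nonneg_eq_0_iff)
  finally have "b\<^sup>2 * (c + 2) / (c + 1)\<^sup>2 \<le> 0" by simp
  moreover have "(c + 1)\<^sup>2 > 0" "c + 2 > 0" using \<open>c \<ge> 0\<close> by simp_all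
  ultimately have "b\<^sup>2 \<le> 0" by (simp add: divide_le_0_iff mult_le_0_iff)
  then show ?thesis unfolding b_def by simp
qed

text \<open>Gram--Schmidt, one vector at a time.  A null residual \<open>r\<close> is orthogonal to everything, so
  the division by \<open>Q r r = 0\<close> (which yields \<open>0\<close>) does no harm.\<close>
lemma exists_orthogonal_projection:
  assumes "finite S"
  shows "\<exists>p. {\<tau>. p \<tau> \<noteq> 0} \<subseteq> S \<and> (\<forall>\<sigma>\<in>S. Q (\<lambda>\<tau>. x \<tau> - p \<tau>) (indicator {\<sigma>}) = 0)"
  using assms
proof (induction S arbitrary: x rule: finite_induct)
  case empty
  show ?case by (rule exI[of _ "\<lambda>_. 0"]) simp
next
  case (insert s S)
  obtain px where px: "{\<tau>. px \<tau> \<noteq> 0} \<subseteq> S" "\<forall>\<sigma>\<in>S. Q (\<lambda>\<tau>. x \<tau> - px \<tau>) (indicator {\<sigma>}) = 0"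
    using insert.IH by blast
  obtain pe where pe: "{\<tau>. pe \<tau> \<noteq> 0} \<subseteq> S"
    "\<forall>\<sigma>\<in>S. Q (\<lambda>\<tau>. indicator {s} \<tau> - pe \<tau>) (indicator {\<sigma>}) = 0"
    using insert.IH by blast
  define r where "r = (\<lambda>\<tau>. indicator {s} \<tau> - pe \<tau>)"
  define l where "l = Q (\<lambda>\<tau>. x \<tau> - px \<tau>) r / Q r r"
  define p where "p \<tau> = px \<tau> + l * r \<tau>" for \<tau>
  have residual: "Q (\<lambda>\<tau>. x \<tau> - p \<tau>) c = Q (\<lambda>\<tau>. x \<tau> - px \<tau>) c - l * Q r c" for c
    using linear_left[of 1 "\<lambda>\<tau>. x \<tau> - px \<tau>" "- l" r c] by (simp add: p_def algebra_simps)
  have orth_S: "\<forall>\<sigma>\<in>S. Q (\<lambda>\<tau>. x \<tau> - p \<tau>) (indicator {\<sigma>}) = 0"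
    using px pe by (simp add: residual r_def)
  have "Q (\<lambda>\<tau>. x \<tau> - p \<tau>) r = 0"
  proof (cases "Q r r = 0")
    case True
    then show ?thesis
      using null_imp_orthogonal[OF True, of "\<lambda>\<tau>. x \<tau> - px \<tau>"] sym by (simp add: residual)
  qed (simp add: residual l_def)
  moreover have "Q (\<lambda>\<tau>. x \<tau> - p \<tau>) pe = 0"
    using orthogonal_if_supported[OF insert.hyps(1) pe(1) orth_S] sym by simp
  moreover have "indicator {s} = (\<lambda>\<tau>. r \<tau> + pe \<tau>)"
    by (simp add: r_def)
  ultimately have "Q (\<lambda>\<tau>. x \<tau> - p \<tau>) (indicator {s}) = 0"
    by (simp add: add_right)
  moreover have "px \<tau> = 0" "pe \<tau> = 0" if "\<tau> \<notin> S" for \<tau>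
    using px(1) pe(1) that by auto
  then have "{\<tau>. p \<tau> \<noteq> 0} \<subseteq> insert s S"
    by (auto simp: p_def r_def indicator_def)
  ultimately show ?case using orth_S by auto
qed

lemma projection_residual_le:
  assumes "finite S" and "{\<tau>. p \<tau> \<noteq> 0} \<subseteq> S" and "{\<tau>. q \<tau> \<noteq> 0} \<subseteq> S"
    and orth: "\<forall>\<sigma>\<in>S. Q (\<lambda>\<tau>. x \<tau> - p \<tau>) (indicator {\<sigma>}) = 0"
  shows "Q (\<lambda>\<tau>. x \<tau> - p \<tau>) (\<lambda>\<tau>. x \<tau> - p \<tau>) \<le> Q (\<lambda>\<tau>. x \<tau> - q \<tau>) (\<lambda>\<tau>. x \<tau> - q \<tau>)"
proof -
  let ?z = "\<lambda>\<tau>. x \<tau> - p \<tau>" and ?d = "\<lambda>\<tau>. p \<tau> - q \<tau>"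
  have "{\<tau>. ?d \<tau> \<noteq> 0} \<subseteq> S" using assms(2,3) by (auto simp: subset_iff) metis
  then have "Q ?d ?z = 0" by (rule orthogonal_if_supported[OF assms(1) _ orth])
  then have "Q ?z ?d = 0" by (simp add: sym)
  moreover have "(\<lambda>\<tau>. x \<tau> - q \<tau>) = (\<lambda>\<tau>. ?z \<tau> + 1 * ?d \<tau>)" by auto
  ultimately have "Q (\<lambda>\<tau>. x \<tau> - q \<tau>) (\<lambda>\<tau>. x \<tau> - q \<tau>) = Q ?z ?z + Q ?d ?d"
    using pythagoras[of ?z ?d 1] by simp
  then show ?thesis using nonneg[of ?d] by simp
qed

end

locale centered_gaussian_family = prob_space M
  for M :: "'a measure" +
  fixes T :: "real set" and B :: "real \<Rightarrow> 'a \<Rightarrow> real"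
  assumes finite_index: "finite T"
    and measurable_B: "t \<in> T \<Longrightarrow> B t \<in> borel_measurable M"
    and gaussian_lin_comb: "\<exists>v. centered_gaussian_rv M (\<lambda>x. \<Sum>t\<in>T. c t * B t x) v"
    and integrable_B_mult: "s \<in> T \<Longrightarrow> t \<in> T \<Longrightarrow> integrable M (\<lambda>x. B s x * B t x)"
begin

definition lin_comb :: "(real \<Rightarrow> real) \<Rightarrow> 'a \<Rightarrow> real" where
  "lin_comb c x = (\<Sum>t\<in>T. c t * B t x)"

definition cov :: "(real \<Rightarrow> real) \<Rightarrow> (real \<Rightarrow> real) \<Rightarrow> real" where
  "cov c d = (\<integral>x. lin_comb c x * lin_comb d x \<partial>M)"

lemma measurable_lin_comb [measurable]: "lin_comb c \<in> borel_measurable M"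
  unfolding lin_comb_def[abs_def] using measurable_B by (intro borel_measurable_sum) auto

lemma lin_comb_linear: "lin_comb (\<lambda>\<tau>. r * a \<tau> + s * b \<tau>) x = r * lin_comb a x + s * lin_comb b x"
  unfolding lin_comb_def by (simp add: sum.distrib sum_distrib_left algebra_simps)

lemma lin_comb_indicator:
  assumes "t \<in> T"
  shows "lin_comb (indicator {t}) x = B t x"
proof -
  have "lin_comb (indicator {t}) x = (\<Sum>\<tau>\<in>T. if \<tau> = t then B \<tau> x else 0)"
    unfolding lin_comb_def by (intro sum.cong) auto
  then show ?thesis using finite_index \<open>t \<in> T\<close> by simp
qed

lemma integrable_lin_comb_mult: "integrable M (\<lambda>x. lin_comb c x * lin_comb d x)"
proof -
  have "lin_comb c x * lin_comb d x = (\<Sum>s\<in>T. \<Sum>t\<in>T. (c s * d t) * (B s x * B t x))" for x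
    unfolding lin_comb_def sum_product by (intro sum.cong refl) (simp add: algebra_simps)
  then show ?thesis
    using integrable_B_mult by simp
qed

sublocale cov: semi_inner_product cov
proof
  fix a b c :: "real \<Rightarrow> real" and r s :: real
  show "cov (\<lambda>\<tau>. r * a \<tau> + s * b \<tau>) c = r * cov a c + s * cov b c"
    using integrable_lin_comb_mult[of a c] integrable_lin_comb_mult[of b c]
    by (simp add: cov_def lin_comb_linear distrib_right mult.assoc)
  show "cov a b = cov b a"
    by (simp add: cov_def mult.commute)
  show "0 \<le> cov a a"
    by (simp add: cov_def)
qed

lemma centered_gaussian_rv_lin_comb: "centered_gaussian_rv M (lin_comb c) (cov c c)"
proof -
  obtain v where v: "centered_gaussian_rv M (lin_comb c) v"
    using gaussian_lin_comb[of c] unfolding lin_comb_def[abs_def] by blast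
  moreover have "v = cov c c"
    using centered_gaussian_rv_second_moment[OF prob_space_axioms v] by (simp add: cov_def power2_eq_square)
  ultimately show ?thesis by simp
qed

lemma integral_lin_comb: "(\<integral>x. lin_comb c x \<partial>M) = 0"
  by (rule centered_gaussian_rv_mean[OF prob_space_axioms centered_gaussian_rv_lin_comb])

lemma char_lin_comb: "(\<integral>x. iexp (lin_comb c x) \<partial>M) = exp (- cov c c / 2)"
  by (rule centered_gaussian_rv_char[OF prob_space_axioms centered_gaussian_rv_lin_comb])

lemma integrable_lin_comb: "integrable M (lin_comb c)"
proof (rule square_integrable_imp_integrable)
  show "integrable M (\<lambda>x. (lin_comb c x)\<^sup>2)"
    using integrable_lin_comb_mult[of c c] by (simp only: power2_eq_square)
qed simp

definition cylinder_indicator :: "real set \<Rightarrow> (real \<Rightarrow> real set) \<Rightarrow> 'a \<Rightarrow> real" where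
  "cylinder_indicator D A x = (\<Prod>\<sigma>\<in>D. indicator (A \<sigma>) (B \<sigma> x))"

lemma cylinder_indicator_bounds: "0 \<le> cylinder_indicator D A x" "cylinder_indicator D A x \<le> 1"
  unfolding cylinder_indicator_def by (auto intro!: prod_nonneg prod_le_1)

lemma measurable_cylinder_indicator [measurable]:
  assumes "D \<subseteq> T" and "\<forall>\<sigma>\<in>D. A \<sigma> \<in> sets borel"
  shows "cylinder_indicator D A \<in> borel_measurable M"
  unfolding cylinder_indicator_def[abs_def] using assms measurable_B
  by (intro borel_measurable_prod) (auto intro: measurable_compose[OF _ borel_measurable_indicator])

lemma lin_comb_fun_upd:
  assumes "a \<in> T" and "u a = 0"
  shows "lin_comb (u(a := r)) x = lin_comb u x + r * B a x"
proof -
  have "u(a := r) = (\<lambda>\<tau>. 1 * u \<tau> + r * indicator {a} \<tau>)"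
    using assms(2) by (auto simp: indicator_def)
  then show ?thesis by (simp only: lin_comb_linear lin_comb_indicator[OF assms(1)])
qed

lemma measurable_lin_comb_gen_sigma:
  assumes "S \<subseteq> T" and "{\<tau>. p \<tau> \<noteq> 0} \<subseteq> S"
  shows "lin_comb p \<in> borel_measurable (gen_sigma M B S)"
proof -
  have "lin_comb p = (\<lambda>x. \<Sum>\<sigma>\<in>S. p \<sigma> * B \<sigma> x)"
    unfolding lin_comb_def[abs_def] using assms finite_index
    by (intro ext sum.mono_neutral_right) auto
  also have "\<dots> \<in> borel_measurable (gen_sigma M B S)"
  proof (intro borel_measurable_sum)
    fix \<sigma> assume "\<sigma> \<in> S"
    then have [measurable]: "B \<sigma> \<in> borel_measurable (gen_sigma M B S)" by (rule measurable_gen_sigma)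
    show "(\<lambda>x. p \<sigma> * B \<sigma> x) \<in> borel_measurable (gen_sigma M B S)" by measurable
  qed
  finally show ?thesis .
qed

end

locale orthogonal_gaussian_component = centered_gaussian_family +
  fixes S :: "real set" and z :: "real \<Rightarrow> real"
  assumes subset_index: "S \<subseteq> T"
    and orthogonal: "\<forall>\<sigma>\<in>S. cov z (indicator {\<sigma>}) = 0"
begin

abbreviation Z :: "'a \<Rightarrow> real" where "Z \<equiv> lin_comb z"

lemma finite_S: "finite S"
  using finite_subset[OF subset_index finite_index] .

lemma subalgebra_gen_sigma_S: "subalgebra M (gen_sigma M B S)"
  using subset_index measurable_B by (intro subalgebra_gen_sigma) auto

lemma cylinder_events_subset_events: "cylinder_events M B S \<subseteq> events"
  using cylinder_events_subset_gen_sigma[OF finite_S] subalgebra_gen_sigma_S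
  by (auto simp: subalgebra_def)

lemma char_lin_comb_mult_char_Z:
  assumes "{\<tau>. u \<tau> \<noteq> 0} \<subseteq> S"
  shows "(\<integral>x. iexp (lin_comb u x) * iexp (s * Z x) \<partial>M)
    = (\<integral>x. iexp (lin_comb u x) \<partial>M) * (\<integral>x. iexp (s * Z x) \<partial>M)"
proof -
  have "cov u z = 0"
    using cov.orthogonal_if_supported[OF finite_S assms orthogonal] .
  moreover have "iexp (lin_comb u x) * iexp (s * Z x) = iexp (lin_comb (\<lambda>\<tau>. 1 * u \<tau> + s * z \<tau>) x)"
    and "s * Z x = lin_comb (\<lambda>\<tau>. 0 * u \<tau> + s * z \<tau>) x" for x
    by (simp_all only: lin_comb_linear) (simp_all add: exp_add[symmetric] distrib_left)
  ultimately show ?thesis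
    by (simp add: char_lin_comb cov.pythagoras cov.scale_scale exp_add[symmetric] diff_divide_distrib
        flip: of_real_mult)
qed

lemma char_factorization:
  assumes "D \<subseteq> S" and "\<forall>\<sigma>\<in>D. A \<sigma> \<in> sets borel" and "{\<tau>. u \<tau> \<noteq> 0} \<subseteq> S - D"
  shows "(\<integral>x. of_real (cylinder_indicator D A x) * iexp (lin_comb u x) * iexp (s * Z x) \<partial>M)
    = (\<integral>x. of_real (cylinder_indicator D A x) * iexp (lin_comb u x) \<partial>M) * (\<integral>x. iexp (s * Z x) \<partial>M)"
  using finite_subset[OF assms(1) finite_S] assms
proof (induction D arbitrary: u rule: finite_induct)
  case empty
  then show ?case
    using char_lin_comb_mult_char_Z[of u s] by (simp add: cylinder_indicator_def)
next
  case (insert a D)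
  then have "a \<in> T" "D \<subseteq> T" "u a = 0" using subset_index by auto
  have [measurable]: "B a \<in> borel_measurable M" "A a \<in> sets borel"
    "cylinder_indicator D A \<in> borel_measurable M"
    using insert.prems(2) \<open>a \<in> T\<close> \<open>D \<subseteq> T\<close> by (auto intro: measurable_B measurable_cylinder_indicator)
  have "D \<subseteq> S" "\<forall>\<sigma>\<in>D. A \<sigma> \<in> sets borel" "{\<tau>. (u(a := r)) \<tau> \<noteq> 0} \<subseteq> S - D" for r
    using insert.prems insert.hyps(2) by auto
  from insert.IH[OF this]
  have "(\<integral>x. of_real (cylinder_indicator D A x) * iexp (lin_comb u x + r * B a x) * iexp (s * Z x) \<partial>M)
      = (\<integral>x. of_real (cylinder_indicator D A x) * iexp (lin_comb u x + r * B a x) \<partial>M)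
        * (\<integral>x. iexp (s * Z x) \<partial>M)" for r
    unfolding lin_comb_fun_upd[of a u, OF \<open>a \<in> T\<close> \<open>u a = 0\<close>] .
  then have "(\<integral>x. of_real (cylinder_indicator D A x * indicator (A a) (B a x)) * iexp (lin_comb u x)
        * iexp (s * Z x) \<partial>M)
      = (\<integral>x. of_real (cylinder_indicator D A x * indicator (A a) (B a x)) * iexp (lin_comb u x) \<partial>M)
        * (\<integral>x. iexp (s * Z x) \<partial>M)"
    by (intro char_factorization_indicator) (simp_all add: cylinder_indicator_bounds)
  then show ?case
    using insert.hyps by (simp add: cylinder_indicator_def mult.commute)
qed

lemma prob_cylinder_Int_vimage:
  assumes X: "X \<in> cylinder_events M B S" and [measurable]: "U \<in> sets borel"
  shows "prob (X \<inter> (Z -` U \<inter> space M)) = prob X * prob (Z -` U \<inter> space M)"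
proof (rule prob_Int_vimage_if_char_factorizes)
  obtain A where X_eq: "X = {x \<in> space M. \<forall>\<sigma>\<in>S. B \<sigma> x \<in> A \<sigma>}" and A: "\<forall>\<sigma>\<in>S. A \<sigma> \<in> sets borel"
    using X unfolding cylinder_events_def by auto
  show "X \<in> events"
    using X cylinder_events_subset_events by blast
  have indicator_X: "indicator X x = cylinder_indicator S A x" if "x \<in> space M" for x
    using that finite_S by (simp add: X_eq cylinder_indicator_def indicator_def)
  have "(\<integral>x. cylinder_indicator S A x \<partial>M) = prob X"
    using \<open>X \<in> events\<close> by (simp flip: indicator_X cong: Bochner_Integration.integral_cong)
  fix s
  have "(\<integral>x. indicator X x * iexp (s * Z x) \<partial>M)
      = (\<integral>x. of_real (cylinder_indicator S A x) * iexp (lin_comb (\<lambda>_. 0) x) * iexp (s * Z x) \<partial>M)"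
    by (intro Bochner_Integration.integral_cong) (simp_all add: lin_comb_def of_real_indicator flip: indicator_X)
  also have "\<dots> = prob X * (\<integral>x. iexp (s * Z x) \<partial>M)"
    using char_factorization[of S A "\<lambda>_. 0" s] A \<open>(\<integral>x. cylinder_indicator S A x \<partial>M) = prob X\<close>
    by (simp add: lin_comb_def)
  finally show "(\<integral>x. indicator X x * iexp (s * Z x) \<partial>M) = prob X * (\<integral>x. iexp (s * Z x) \<partial>M)" .
qed simp_all

lemma indep_set_gen_sigma_lin_comb:
  "indep_set (sets (gen_sigma M B S)) (sigma_sets (space M) {Z -` U \<inter> space M | U. U \<in> sets borel})"
proof -
  let ?V = "{Z -` U \<inter> space M | U. U \<in> sets borel}"
  have "indep_set (cylinder_events M B S) ?V"
    unfolding indep_sets2_eq using cylinder_events_subset_events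
    by (auto intro: prob_cylinder_Int_vimage)
  moreover have "Int_stable ?V"
  proof (rule Int_stableI)
    fix V V' assume "V \<in> ?V" "V' \<in> ?V"
    then obtain U U' where "V = Z -` U \<inter> space M" "V' = Z -` U' \<inter> space M" "U \<in> sets borel" "U' \<in> sets borel"
      by auto
    then have "V \<inter> V' = Z -` (U \<inter> U') \<inter> space M" "U \<inter> U' \<in> sets borel" by auto
    then show "V \<inter> V' \<in> ?V" by blast
  qed
  ultimately have "indep_set (sigma_sets (space M) (cylinder_events M B S)) (sigma_sets (space M) ?V)"
    by (intro indep_set_sigma_sets Int_stable_cylinder_events)
  then show ?thesis by (simp add: sets_gen_sigma_cylinder_events[OF finite_S])
qed

lemma real_cond_exp_comp_Z:
  assumes "g \<in> borel_measurable borel" and "integrable M (\<lambda>x. g (Z x))"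
  shows "AE x in M. real_cond_exp M (gen_sigma M B S) (\<lambda>x. g (Z x)) x = (\<integral>x. g (Z x) \<partial>M)"
  using subalgebra_gen_sigma_S indep_set_gen_sigma_lin_comb measurable_lin_comb assms
  by (rule real_cond_exp_indep)

end

context centered_gaussian_family
begin

lemma cond_var_eq_cov_residual:
  assumes "S \<subseteq> T" and "t \<in> T" and p: "{\<tau>. p \<tau> \<noteq> 0} \<subseteq> S"
    and orth: "\<forall>\<sigma>\<in>S. cov (\<lambda>\<tau>. indicator {t} \<tau> - p \<tau>) (indicator {\<sigma>}) = 0"
  shows "AE x in M. cond_var M (gen_sigma M B S) (B t) x
    = cov (\<lambda>\<tau>. indicator {t} \<tau> - p \<tau>) (\<lambda>\<tau>. indicator {t} \<tau> - p \<tau>)"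
proof -
  define z where "z \<tau> = indicator {t} \<tau> - p \<tau>" for \<tau>
  interpret orthogonal_gaussian_component M T B S z
    using \<open>S \<subseteq> T\<close> orth by unfold_locales (simp_all add: z_def[abs_def])
  let ?F = "gen_sigma M B S"
  interpret sigma_finite_subalgebra M ?F
    by (intro finite_measure_subalgebra_is_sigma_finite) (unfold_locales, rule subalgebra_gen_sigma_S)
  have B_t: "B t = (\<lambda>x. lin_comb p x + Z x)"
    using lin_comb_linear[of 1 p 1 z] lin_comb_indicator[OF \<open>t \<in> T\<close>]
    by (simp add: z_def[abs_def] fun_eq_iff)
  have "AE x in M. real_cond_exp M ?F (\<lambda>x. lin_comb p x + Z x) x
      = real_cond_exp M ?F (lin_comb p) x + real_cond_exp M ?F (\<lambda>x. Z x) x"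
    by (intro real_cond_exp_add integrable_lin_comb)
  moreover have "AE x in M. real_cond_exp M ?F (lin_comb p) x = lin_comb p x"
    using integrable_lin_comb measurable_lin_comb_gen_sigma[OF \<open>S \<subseteq> T\<close> p]
    by (rule real_cond_exp_F_meas)
  moreover have "AE x in M. real_cond_exp M ?F (\<lambda>x. Z x) x = 0"
    using real_cond_exp_comp_Z[of "\<lambda>y. y"] integrable_lin_comb by (simp add: integral_lin_comb)
  ultimately have "AE x in M. (B t x - real_cond_exp M ?F (B t) x)\<^sup>2 = (Z x)\<^sup>2"
    unfolding B_t by eventually_elim simp
  then have "AE x in M. cond_var M ?F (B t) x = real_cond_exp M ?F (\<lambda>x. (Z x)\<^sup>2) x"
    unfolding cond_var_def by (rule real_cond_exp_cong) (use measurable_B \<open>t \<in> T\<close> in simp_all)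
  moreover have "AE x in M. real_cond_exp M ?F (\<lambda>x. (Z x)\<^sup>2) x = cov z z"
    using real_cond_exp_comp_Z[of "\<lambda>y. y\<^sup>2"] integrable_lin_comb_mult[of z z]
    by (simp add: cov_def power2_eq_square)
  ultimately show ?thesis
    by eventually_elim (simp add: z_def[abs_def])
qed

lemma cond_var_le_increment:
  assumes "S \<subseteq> T" and "s \<in> S" and "t \<in> T"
  shows "AE x in M. cond_var M (gen_sigma M B S) (B t) x \<le> (\<integral>x. (B t x - B s x)\<^sup>2 \<partial>M)"
proof -
  have "finite S" using assms(1) finite_index by (rule finite_subset)
  obtain p where p: "{\<tau>. p \<tau> \<noteq> 0} \<subseteq> S"
    and orth: "\<forall>\<sigma>\<in>S. cov (\<lambda>\<tau>. indicator {t} \<tau> - p \<tau>) (indicator {\<sigma>}) = 0"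
    using cov.exists_orthogonal_projection[OF \<open>finite S\<close>] by blast
  have "{\<tau>. indicator {s} \<tau> \<noteq> (0::real)} \<subseteq> S" using \<open>s \<in> S\<close> by (auto simp: indicator_def)
  with p orth have "cov (\<lambda>\<tau>. indicator {t} \<tau> - p \<tau>) (\<lambda>\<tau>. indicator {t} \<tau> - p \<tau>)
      \<le> cov (\<lambda>\<tau>. indicator {t} \<tau> - indicator {s} \<tau>) (\<lambda>\<tau>. indicator {t} \<tau> - indicator {s} \<tau>)"
    by (intro cov.projection_residual_le[OF \<open>finite S\<close>])
  also have "\<dots> = (\<integral>x. (B t x - B s x)\<^sup>2 \<partial>M)"
    using lin_comb_linear[of 1 "indicator {t}" "-1" "indicator {s}"] assms
    by (simp add: cov_def lin_comb_indicator power2_eq_square subsetD)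
  finally have residual_le: "cov (\<lambda>\<tau>. indicator {t} \<tau> - p \<tau>) (\<lambda>\<tau>. indicator {t} \<tau> - p \<tau>)
      \<le> (\<integral>x. (B t x - B s x)\<^sup>2 \<partial>M)" .
  show ?thesis
    using cond_var_eq_cov_residual[OF assms(1,3) p orth] by eventually_elim (simp add: residual_le)
qed

end

lemma is_fbm_centered_gaussian_family:
  assumes "is_fbm M H B" and "finite T" and "T \<subseteq> {0..1}"
  shows "centered_gaussian_family M T B"
  using assms unfolding is_fbm_def centered_gaussian_family_def centered_gaussian_family_axioms_def
  by (auto simp: subset_iff)

lemma fbm_increment_second_moment:
  assumes "is_fbm M H B" and "s \<in> {0..1}" and "t \<in> {0..1}"
  shows "(\<integral>x. (B t x - B s x)\<^sup>2 \<partial>M) = \<bar>t - s\<bar> powr (2 * H)"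
proof -
  have int: "integrable M (\<lambda>x. B a x * B b x)" and cov: "(\<integral>x. B a x * B b x \<partial>M) = fbm_cov H a b"
    if "a \<in> {s, t}" "b \<in> {s, t}" for a b
    using assms that unfolding is_fbm_def by auto
  have "(B t x - B s x)\<^sup>2 = B t x * B t x - 2 * (B s x * B t x) + B s x * B s x" for x
    by (simp add: power2_eq_square algebra_simps)
  then have "(\<integral>x. (B t x - B s x)\<^sup>2 \<partial>M)
      = (\<integral>x. B t x * B t x \<partial>M) - 2 * (\<integral>x. B s x * B t x \<partial>M) + (\<integral>x. B s x * B s x \<partial>M)"
    using int[of t t] int[of s t] int[of s s] by simp
  moreover have "fbm_cov H t t = \<bar>t\<bar> powr (2 * H)" "fbm_cov H s s = \<bar>s\<bar> powr (2 * H)"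
    and "2 * fbm_cov H s t = \<bar>s\<bar> powr (2 * H) + \<bar>t\<bar> powr (2 * H) - \<bar>t - s\<bar> powr (2 * H)"
    by (simp_all add: fbm_cov_def abs_minus_commute)
  ultimately show ?thesis
    using cov[of t t] cov[of s t] cov[of s s] by simp
qed

theorem lemma1:
  fixes M :: "'a measure" and H :: real and B :: "real \<Rightarrow> 'a \<Rightarrow> real"
    and k j :: nat
  assumes "0 < H" "H < 1"
    and "is_fbm M H B"
    and "k \<ge> 1" and "j < 2 ^ (k - 1)"
  shows "AE x in M.
     cond_var M (gen_sigma M B {dyadic (k - 1) i | i. i \<le> 2 ^ (k - 1)})
        (B (dyadic k (2 * j + 1))) x \<le> 2 * 2 powr (- 2 * real k * H)"
proof -
  \<comment> \<open>The sharper bound \<open>2 powr (- 2 * real k * H)\<close> holds for every \<open>H\<close>.\<close>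
  define S where "S = {dyadic (k - 1) i | i. i \<le> 2 ^ (k - 1)}"
  define s where "s = dyadic (k - 1) j"
  define t where "t = dyadic k (2 * j + 1)"
  obtain n where k: "k = Suc n" using \<open>k \<ge> 1\<close> by (cases k) auto
  have S_eq: "S = (\<lambda>i. real i / 2 ^ n) ` {..2 ^ n}"
    unfolding S_def dyadic_def k by auto
  then have "finite S" by simp
  have "S \<subseteq> {0..1}" unfolding S_eq by auto
  have "s \<in> S" unfolding S_eq s_def dyadic_def k using \<open>j < 2 ^ (k - 1)\<close> k by auto
  have "2 * j + 1 \<le> (2::nat) ^ k" using \<open>j < 2 ^ (k - 1)\<close> k by simp
  then have "real (2 * j + 1) \<le> 2 ^ k" by (metis of_nat_le_iff of_nat_numeral of_nat_power)
  then have "t \<in> {0..1}" unfolding t_def dyadic_def by simp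
  have "t - s = 1 / 2 ^ k"
    unfolding t_def s_def dyadic_def k by (simp add: field_simps)
  then have "t - s = 2 powr - real k"
    by (simp add: powr_minus_divide powr_realpow)
  interpret centered_gaussian_family M "insert t S" B
    using is_fbm_centered_gaussian_family[OF assms(3)] \<open>finite S\<close> \<open>S \<subseteq> {0..1}\<close> \<open>t \<in> {0..1}\<close> by simp
  have "(\<integral>x. (B t x - B s x)\<^sup>2 \<partial>M) = \<bar>t - s\<bar> powr (2 * H)"
    using \<open>s \<in> S\<close> \<open>S \<subseteq> {0..1}\<close> \<open>t \<in> {0..1}\<close> by (intro fbm_increment_second_moment[OF assms(3)]) auto
  then have "AE x in M. cond_var M (gen_sigma M B S) (B t) x \<le> \<bar>t - s\<bar> powr (2 * H)"
    using cond_var_le_increment[of S s t] \<open>s \<in> S\<close> by auto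
  moreover have "\<bar>t - s\<bar> powr (2 * H) \<le> 2 * 2 powr (- 2 * real k * H)"
    using \<open>t - s = 2 powr - real k\<close> by (simp add: powr_powr mult_ac)
  ultimately have "AE x in M. cond_var M (gen_sigma M B S) (B t) x \<le> 2 * 2 powr (- 2 * real k * H)"
    by (auto elim: eventually_mono)
  then show ?thesis unfolding S_def t_def .
qed

end
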